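(* In the periodic setting below, let $0<d\le2$ and $t_0\in\mathbb R$. For any $u^0\in l^{\infty,+}$: if $u^0\le d\phi(t_0,\cdot)+d_1\phi_1(t_0,\cdot)$ (resp. $u^0\ge d\phi(t_0,\cdot)-d_1\phi_1(t_0,\cdot)$), then for $d_1/d$ sufficiently large, $u(t;t_0,u^0)\le d\phi(t,\cdot)+d_1\phi_1(t,\cdot)$ (resp. $u(t;t_0,u^0)\ge d\phi(t,\cdot)-d_1\phi_1(t,\cdot)$) for all $t\ge t_0$.
   Context: Periodic setting: equation (E) is $\dot u_j=d(t,j+1)(u_{j+1}-u_j)+d(t,j-1)(u_{j-1}-u_j)+u_jf(t,j,u_j)$, $j\in\mathbb Z$, with $d$ bounded, $\inf d>0$, $d(t+T,j)=d(t,j+J)=d(t,j)$, $f(t+T,j,u)=f(t,j+J,u)=f(t,j,u)$ ($T>0$, $J\in\mathbb Z^+$), and $f$ satisfying (H0): locally Hölder in $t$, Lipschitz in $u$, $C^1$ in $u$ for $u\ge0$, $f(t,j,u)=f(t,j,0)$ for $u\le0$, $f<0$ for $u\ge M_0$, $f_u<0$ for $u\ge0$, $\liminf_{t-s\to\infty}\frac1{t-s}\int_s^t\inf_jf(\tau,j,0)d\tau>0$. $u(t;s,u^0)$ is the solution of (E) with $u(s;s,u^0)=u^0$; $l^{\infty,+}$ is the set of bounded nonnegative sequences; inequalities between sequences are componentwise. For $\mu\in\mathbb R$, $\lambda(\mu)$ and $\psi^\mu(t,j)>0$ ($T$-periodic in $t$, $J$-periodic in $j$, $\|\psi^\mu(0,\cdot)\|_\infty=1$)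 are such that $e^{\lambda(\mu)t}\psi^\mu(t,j)$ solves $\dot v_j=d(t,j-1)(e^\mu v_{j-1}-v_j)+d(t,j+1)(e^{-\mu}v_{j+1}-v_j)+f(t,j,0)v_j$. $\mu^*>0$ minimizes $\lambda(\mu)/\mu$ over $\mu>0$, $c^*=\lambda(\mu^* )/\mu^*$. Fix $c>c^*$ and $0<\mu<\mu'<\min\{2\mu,\mu^*\}$ with $c=\lambda(\mu)/\mu$ and $\lambda(\mu)/\mu>\lambda(\mu')/\mu'>c^*$. Set $\phi(t,j)=e^{-\mu(j-ct)}\psi^\mu(t,j)$ and $\phi_1(t,j)=e^{-\mu'(j-ct)}\psi^{\mu'}(t,j)$. *)

theory Defs
  imports "HOL-Analysis.Analysis"
begin

definition E_rhs ::
  "(real \<Rightarrow> int \<Rightarrow> real) \<Rightarrow> (real \<Rightarrow> int \<Rightarrow> real \<Rightarrow> real) \<Rightarrow> real \<Rightarrow> (int \<Rightarrow> real) \<Rightarrow> int \<Rightarrow> real"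
  where "E_rhs d f t u j =
     d t (j + 1) * (u (j + 1) - u j) + d t (j - 1) * (u (j - 1) - u j) + u j * f t j (u j)"

definition is_solution_E ::
  "(real \<Rightarrow> int \<Rightarrow> real) \<Rightarrow> (real \<Rightarrow> int \<Rightarrow> real \<Rightarrow> real) \<Rightarrow> real \<Rightarrow> (int \<Rightarrow> real)
    \<Rightarrow> (real \<Rightarrow> int \<Rightarrow> real) \<Rightarrow> bool"
  where "is_solution_E d f s u0 u \<longleftrightarrow>
     u s = u0 \<and>
     (\<forall>t1\<ge>s. \<exists>B. \<forall>t\<in>{s..t1}. \<forall>j. \<bar>u t j\<bar> \<le> B) \<and>
     (\<forall>j. \<forall>t\<ge>s. ((\<lambda>\<tau>. u \<tau> j) has_real_derivative E_rhs d f t (u t) j) (at t within {s..}))"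

definition l_inf_plus :: "(int \<Rightarrow> real) set"
  where "l_inf_plus = {v. (\<exists>B. \<forall>j. \<bar>v j\<bar> \<le> B) \<and> (\<forall>j. 0 \<le> v j)}"

end

theory Submission
  imports Defs
begin

text \<open>Both estimates are comparison arguments for (E). Because \<open>\<lambda>(\<mu>) = c\<mu>\<close>, the front \<open>\<phi>\<close> solves
  the linearisation of (E) at \<open>u = 0\<close> exactly, whereas \<open>\<phi>\<^sub>1\<close> solves it with the surplus \<open>\<kappa>\<phi>\<^sub>1\<close>,
  \<open>\<kappa> = \<mu>'c - \<lambda>(\<mu>') > 0\<close>. As \<open>f\<close> decreases in \<open>u\<close>, \<open>d\<phi> + d\<^sub>1\<phi>\<^sub>1\<close> is therefore a supersolution.
  For \<open>v = d\<phi> - d\<^sub>1\<phi>\<^sub>1\<close> the defect \<open>v (f(t,j,0) - f(t,j,v))\<close> is at most \<open>L v\<^sup>2\<close> where \<open>v > 0\<close>.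
  There \<open>x = j - ct > 0\<close>, hence \<open>v\<^sup>2 \<le> 2d Q\<^sup>2 exp (-2\<mu>x) \<le> 2d Q\<^sup>2 exp (-\<mu>'x)\<close> by \<open>\<mu>' \<le> 2\<mu>\<close>,
  which the surplus \<open>\<kappa> d\<^sub>1 \<phi>\<^sub>1\<close> absorbs once \<open>d\<^sub>1/d\<close> is large: \<open>v\<close> is a subsolution.\<close>

section \<open>Lattice diffusion and a maximum principle\<close>

definition lattice_diffusion :: "(real \<Rightarrow> int \<Rightarrow> real) \<Rightarrow> real \<Rightarrow> (int \<Rightarrow> real) \<Rightarrow> int \<Rightarrow> real"
  where "lattice_diffusion a t v j = a t (j + 1) * (v (j + 1) - v j) + a t (j - 1) * (v (j - 1) - v j)"

lemma E_rhs_eq: "E_rhs d f t v j = lattice_diffusion d t v j + v j * f t j (v j)"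
  by (simp add: E_rhs_def lattice_diffusion_def)

lemma lattice_diffusion_linear:
  "lattice_diffusion a t (\<lambda>i. x * v i + y * w i) j = x * lattice_diffusion a t v j + y * lattice_diffusion a t w j"
  "lattice_diffusion a t (\<lambda>i. x * v i - y * w i) j = x * lattice_diffusion a t v j - y * lattice_diffusion a t w j"
  by (simp_all add: lattice_diffusion_def algebra_simps)

lemma lattice_diffusion_diff:
  "lattice_diffusion a t (\<lambda>i. v i - w i) j = lattice_diffusion a t v j - lattice_diffusion a t w j"
  by (simp add: lattice_diffusion_def algebra_simps)

lemma has_real_derivative_nonneg_if_less_before:
  fixes z :: "real \<Rightarrow> real"
  assumes der: "(z has_real_derivative D) (at \<tau> within {ta..})"
    and "ta < \<tau>" and less: "\<And>t. ta \<le> t \<Longrightarrow> t < \<tau> \<Longrightarrow> z t < z \<tau>"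
  shows "0 \<le> D"
proof (rule ccontr)
  assume "\<not> 0 \<le> D"
  from has_real_derivative_neg_dec_left[OF der] this obtain e where
    e: "e > 0" "\<And>h. h > 0 \<Longrightarrow> \<tau> - h \<in> {ta..} \<Longrightarrow> h < e \<Longrightarrow> z \<tau> < z (\<tau> - h)"
    by auto
  define h where "h = min (e/2) (\<tau> - ta)"
  have "h > 0" "h < e" "\<tau> - h \<in> {ta..}" using e \<open>ta < \<tau>\<close> by (auto simp: h_def)
  then show False using e less[of "\<tau> - h"] by fastforce
qed

lemma one_plus_square_shift:
  fixes x :: real
  shows "1 + (x + 1)\<^sup>2 \<le> 3 * (1 + x\<^sup>2)" and "1 + (x - 1)\<^sup>2 \<le> 3 * (1 + x\<^sup>2)"
proof -
  have "0 \<le> (x - 1)\<^sup>2 + x\<^sup>2" "0 \<le> (x + 1)\<^sup>2 + x\<^sup>2" by simp_all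
  then show "1 + (x + 1)\<^sup>2 \<le> 3 * (1 + x\<^sup>2)" "1 + (x - 1)\<^sup>2 \<le> 3 * (1 + x\<^sup>2)"
    by (simp_all add: power2_eq_square algebra_simps)
qed

lemma abs_le_one_plus_square:
  fixes x :: real
  shows "\<bar>x\<bar> \<le> 1 + x\<^sup>2"
proof -
  have "0 \<le> (\<bar>x\<bar> - 1)\<^sup>2" by simp
  then show ?thesis by (simp add: power2_eq_square algebra_simps)
qed

lemma first_touching_time:
  fixes z :: "real \<Rightarrow> 'a \<Rightarrow> real"
  assumes "finite F" and "j \<in> F" and "t \<in> {ta..tb}" and "0 \<le> z t j"
    and cont: "\<And>j. j \<in> F \<Longrightarrow> continuous_on {ta..tb} (\<lambda>s. z s j)"
    and start: "\<And>j. j \<in> F \<Longrightarrow> z ta j < 0"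
  obtains \<tau> j0 where "\<tau> \<in> {ta<..tb}" and "j0 \<in> F" and "z \<tau> j0 = 0"
    and "\<And>s j. j \<in> F \<Longrightarrow> s \<in> {ta..<\<tau>} \<Longrightarrow> z s j < 0"
    and "\<And>j. j \<in> F \<Longrightarrow> z \<tau> j \<le> 0"
proof -
  define S where "S = (\<Union>j\<in>F. {s \<in> {ta..tb}. 0 \<le> z s j})"
  have "t \<in> S" using assms(2-4) by (auto simp: S_def)
  have "closed S" unfolding S_def
    using \<open>finite F\<close> by (intro closed_UN ballI continuous_on_closed_Collect_le cont continuous_on_const) auto
  have bdd: "bdd_below S" unfolding S_def by (rule bdd_belowI[of _ ta]) auto
  define \<tau> where "\<tau> = Inf S"
  have "\<tau> \<in> S" unfolding \<tau>_def using closed_contains_Inf[OF _ bdd \<open>closed S\<close>] \<open>t \<in> S\<close> by auto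
  then obtain j0 where j0: "j0 \<in> F" "\<tau> \<in> {ta..tb}" "0 \<le> z \<tau> j0" by (auto simp: S_def)
  have before: "z s j < 0" if "j \<in> F" "s \<in> {ta..<\<tau>}" for s j
    using cInf_lower[OF _ bdd, of s] that j0(2) unfolding \<tau>_def[symmetric] by (force simp: S_def)
  have "\<tau> \<noteq> ta" using start[OF j0(1)] j0(3) by auto
  then have "ta < \<tau>" using j0(2) by auto
  have at: "z \<tau> j \<le> 0" if jF: "j \<in> F" for j
  proof (rule ccontr)
    assume "\<not> z \<tau> j \<le> 0"
    moreover have "continuous_on {ta..\<tau>} (\<lambda>s. z s j)"
      using continuous_on_subset[OF cont[OF jF]] j0(2) by auto
    ultimately obtain x where "ta \<le> x" "x \<le> \<tau>" "z x j = 0"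
      using IVT'[of "\<lambda>s. z s j" ta 0 \<tau>] start[OF jF] \<open>ta < \<tau>\<close> by auto
    then show False using before[OF jF, of x] \<open>\<not> z \<tau> j \<le> 0\<close> by fastforce
  qed
  show thesis
    using that[of \<tau> j0] j0 at[OF j0(1)] before at \<open>ta < \<tau>\<close> by auto
qed

lemma finite_weighted_sublevel:
  fixes \<epsilon> B :: real
  assumes "0 < \<epsilon>"
  shows "finite {i :: int. \<epsilon> * (1 + (of_int i)\<^sup>2) \<le> B}"
proof (rule finite_subset)
  show "{i :: int. \<epsilon> * (1 + (of_int i)\<^sup>2) \<le> B} \<subseteq> {- \<lceil>B / \<epsilon>\<rceil> .. \<lceil>B / \<epsilon>\<rceil>}"
  proof
    fix i :: int assume "i \<in> {i. \<epsilon> * (1 + (of_int i)\<^sup>2) \<le> B}"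
    moreover have "\<epsilon> * \<bar>of_int i\<bar> \<le> \<epsilon> * (1 + (of_int i)\<^sup>2)"
      using abs_le_one_plus_square \<open>0 < \<epsilon>\<close> by (intro mult_left_mono) auto
    ultimately have "\<epsilon> * \<bar>of_int i\<bar> \<le> B" by simp
    then have "\<bar>of_int i\<bar> \<le> B / \<epsilon>" using \<open>0 < \<epsilon>\<close> by (simp add: pos_le_divide_eq mult.commute)
    then have "\<bar>of_int i\<bar> \<le> real_of_int \<lceil>B / \<epsilon>\<rceil>"
      using le_of_int_ceiling[of "B / \<epsilon>"] by linarith
    then show "i \<in> {- \<lceil>B / \<epsilon>\<rceil> .. \<lceil>B / \<epsilon>\<rceil>}" by auto
  qed
qed simp

lemma lattice_diffusion_le_at_touching:
  assumes a: "\<And>i. 0 \<le> a t i \<and> a t i \<le> A" and "0 \<le> E"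
    and touch: "v j = E * (1 + (of_int j)\<^sup>2)" and below: "\<And>i. v i \<le> E * (1 + (of_int i)\<^sup>2)"
  shows "lattice_diffusion a t v j \<le> 4 * A * v j"
proof -
  have neighbour: "a t i * (v i - v j) \<le> A * (2 * v j)" if "i = j + 1 \<or> i = j - 1" for i
  proof -
    have "1 + (of_int i)\<^sup>2 \<le> 3 * (1 + (of_int j :: real)\<^sup>2)"
      using that one_plus_square_shift[of "of_int j"] by auto
    then have "E * (1 + (of_int i)\<^sup>2) \<le> E * (3 * (1 + (of_int j)\<^sup>2))"
      using \<open>0 \<le> E\<close> by (rule mult_left_mono)
    then have "v i \<le> 3 * v j" using below[of i] touch by (simp add: algebra_simps)
    then have "v i - v j \<le> 2 * v j" by simp
    moreover have "0 \<le> v j" using touch \<open>0 \<le> E\<close> by simp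
    ultimately show ?thesis using a[of i] by (meson mult_left_mono mult_right_mono order_trans zero_le_mult_iff zero_le_numeral)
  qed
  show ?thesis using neighbour[of "j + 1"] neighbour[of "j - 1"] unfolding lattice_diffusion_def by linarith
qed

text \<open>Penalising with the weight \<open>1 + j\<^sup>2\<close> makes the sublevel sets in \<open>j\<close> finite, so that a first
  touching time exists; at that time the growth rate \<open>K\<close> of the penalty beats the diffusion.\<close>

lemma lattice_maximum_principle_weighted:
  fixes w w' a :: "real \<Rightarrow> int \<Rightarrow> real"
  assumes a: "\<And>t j. t \<in> {ta..tb} \<Longrightarrow> 0 \<le> a t j \<and> a t j \<le> A"
    and bdd: "\<And>t j. t \<in> {ta..tb} \<Longrightarrow> w t j \<le> B"
    and der: "\<And>t j. t \<in> {ta..tb} \<Longrightarrow> ((\<lambda>\<tau>. w \<tau> j) has_real_derivative w' t j) (at t within {ta..})"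
    and init: "\<And>j. w ta j \<le> 0"
    and ineq: "\<And>t j. t \<in> {ta..tb} \<Longrightarrow> 0 < w t j \<Longrightarrow>
        w' t j \<le> lattice_diffusion a t (w t) j + C * w t j"
    and "0 < \<epsilon>" and t: "t \<in> {ta..tb}"
  shows "w t j \<le> \<epsilon> * exp ((4 * A + \<bar>C\<bar> + 1) * (t - ta)) * (1 + (of_int j)\<^sup>2)"
proof (rule ccontr)
  define K where "K = 4 * A + \<bar>C\<bar> + 1"
  define g :: "int \<Rightarrow> real" where "g i = 1 + (of_int i)\<^sup>2" for i
  define z where "z s i = w s i - \<epsilon> * exp (K * (s - ta)) * g i" for s i
  define F where "F = {i. \<epsilon> * g i \<le> \<bar>B\<bar>}"
  have "finite F" unfolding F_def g_def using finite_weighted_sublevel[OF \<open>0 < \<epsilon>\<close>] .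
  have g_ge: "1 \<le> g i" for i by (simp add: g_def)
  have "0 \<le> A" using a[of ta 0] t by auto
  have outside: "z s i < 0" if "s \<in> {ta..tb}" "i \<notin> F" for s i
  proof -
    have "1 \<le> exp (K * (s - ta))" using that \<open>0 \<le> A\<close> by (simp add: K_def)
    then have "\<epsilon> * g i \<le> \<epsilon> * exp (K * (s - ta)) * g i"
      using \<open>0 < \<epsilon>\<close> g_ge[of i] by (simp add: mult_right_mono mult_left_mono)
    then show ?thesis using that bdd[of s i] by (auto simp: z_def F_def)
  qed
  have "continuous_on {ta..tb} (\<lambda>s. w s i)" for i
    by (rule DERIV_continuous_on, rule DERIV_subset[OF der]) auto
  then have cont: "continuous_on {ta..tb} (\<lambda>s. z s i)" for i unfolding z_def by (intro continuous_intros)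
  have start: "z ta i < 0" for i
    using init[of i] mult_pos_pos[OF \<open>0 < \<epsilon>\<close>, of "g i"] g_ge[of i] by (simp add: z_def)
  assume "\<not> w t j \<le> \<epsilon> * exp ((4 * A + \<bar>C\<bar> + 1) * (t - ta)) * (1 + (of_int j)\<^sup>2)"
  then have "0 < z t j" by (simp add: z_def g_def K_def)
  then have "j \<in> F" using outside[OF t] by force
  obtain \<tau> j0 where \<tau>: "\<tau> \<in> {ta<..tb}" and "j0 \<in> F" and z0: "z \<tau> j0 = 0"
    and before: "\<And>s. s \<in> {ta..<\<tau>} \<Longrightarrow> z s j0 < 0" and at_F: "\<And>i. i \<in> F \<Longrightarrow> z \<tau> i \<le> 0"
  proof (rule first_touching_time[OF \<open>finite F\<close> \<open>j \<in> F\<close> t, of z])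
    fix \<tau> j0 assume "\<tau> \<in> {ta<..tb}" "j0 \<in> F" "z \<tau> j0 = 0"
      "\<And>s i. i \<in> F \<Longrightarrow> s \<in> {ta..<\<tau>} \<Longrightarrow> z s i < 0" "\<And>i. i \<in> F \<Longrightarrow> z \<tau> i \<le> 0"
    then show thesis using that by blast
  qed (use \<open>0 < z t j\<close> cont start in auto)
  define E where "E = \<epsilon> * exp (K * (\<tau> - ta))"
  have "0 < E" using \<open>0 < \<epsilon>\<close> by (simp add: E_def)
  have w_j0: "w \<tau> j0 = E * g j0" using z0 by (simp add: z_def E_def)
  have "w \<tau> i \<le> E * g i" for i
    using at_F[of i] outside[of \<tau> i] \<tau> by (cases "i \<in> F") (auto simp: z_def E_def)
  then have diffusion: "lattice_diffusion a \<tau> (w \<tau>) j0 \<le> 4 * A * w \<tau> j0"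
    using lattice_diffusion_le_at_touching[of a \<tau> A E "w \<tau>" j0] a \<tau> \<open>0 < E\<close> w_j0 by (auto simp: g_def)
  have "((\<lambda>s. z s j0) has_real_derivative w' \<tau> j0 - \<epsilon> * (K * exp (K * (\<tau> - ta))) * g j0)
      (at \<tau> within {ta..})"
    unfolding z_def using \<tau> by (auto intro!: derivative_eq_intros der)
  then have "0 \<le> w' \<tau> j0 - \<epsilon> * (K * exp (K * (\<tau> - ta))) * g j0"
    by (rule has_real_derivative_nonneg_if_less_before) (use \<tau> before z0 in auto)
  then have "K * w \<tau> j0 \<le> w' \<tau> j0" by (simp add: w_j0 E_def algebra_simps)
  moreover have "0 < w \<tau> j0" using w_j0 \<open>0 < E\<close> g_ge[of j0] by simp
  moreover from this have "w' \<tau> j0 \<le> (4 * A + \<bar>C\<bar>) * w \<tau> j0"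
  proof -
    have "C * w \<tau> j0 \<le> \<bar>C\<bar> * w \<tau> j0" using \<open>0 < w \<tau> j0\<close> by (intro mult_right_mono) auto
    moreover have "(4 * A + \<bar>C\<bar>) * w \<tau> j0 = 4 * A * w \<tau> j0 + \<bar>C\<bar> * w \<tau> j0"
      by (simp add: algebra_simps)
    moreover have "w' \<tau> j0 \<le> lattice_diffusion a \<tau> (w \<tau>) j0 + C * w \<tau> j0"
      using ineq \<tau> \<open>0 < w \<tau> j0\<close> by auto
    ultimately show ?thesis using diffusion by linarith
  qed
  ultimately show False by (simp add: K_def algebra_simps)
qed

lemma lattice_maximum_principle:
  fixes w w' a :: "real \<Rightarrow> int \<Rightarrow> real"
  assumes "\<And>t j. t \<in> {ta..tb} \<Longrightarrow> 0 \<le> a t j \<and> a t j \<le> A"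
    and "\<And>t j. t \<in> {ta..tb} \<Longrightarrow> w t j \<le> B"
    and "\<And>t j. t \<in> {ta..tb} \<Longrightarrow> ((\<lambda>\<tau>. w \<tau> j) has_real_derivative w' t j) (at t within {ta..})"
    and "\<And>j. w ta j \<le> 0"
    and "\<And>t j. t \<in> {ta..tb} \<Longrightarrow> 0 < w t j \<Longrightarrow>
        w' t j \<le> lattice_diffusion a t (w t) j + C * w t j"
    and "t \<in> {ta..tb}"
  shows "w t j \<le> 0"
proof (rule field_le_epsilon)
  fix e :: real assume "0 < e"
  define M where "M = exp ((4 * A + \<bar>C\<bar> + 1) * (t - ta)) * (1 + (of_int j)\<^sup>2)"
  have "0 < M" by (simp add: M_def add_pos_nonneg)
  have "w t j \<le> e / M * exp ((4 * A + \<bar>C\<bar> + 1) * (t - ta)) * (1 + (of_int j)\<^sup>2)"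
    by (rule lattice_maximum_principle_weighted[OF assms(1-5)]) (use \<open>0 < e\<close> \<open>0 < M\<close> assms(6) in auto)
  also have "\<dots> = e / M * M" by (simp only: M_def mult.assoc)
  finally show "w t j \<le> 0 + e" using \<open>0 < M\<close> by simp
qed

section \<open>Periodic functions and regularity\<close>

lemma periodic_shift_int:
  fixes h :: "'a::ring_1 \<Rightarrow> 'b"
  assumes "\<And>x. h (x + p) = h x"
  shows "h (x + of_int k * p) = h x"
proof -
  have nat: "h (x + of_nat n * p) = h x" for x n
    by (induction n arbitrary: x) (auto simp: algebra_simps assms simp flip: add.assoc)
  show ?thesis
  proof (cases "0 \<le> k")
    case True
    then show ?thesis using nat[of x "nat k"] by simp
  next
    case False
    then have "h (x + of_int k * p) = h ((x + of_int k * p) + of_nat (nat (- k)) * p)"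
      using nat[of "x + of_int k * p" "nat (- k)"] by simp
    also have "\<dots> = h x" using False by simp
    finally show ?thesis .
  qed
qed

lemma periodic_representative:
  fixes g :: "real \<Rightarrow> int \<Rightarrow> 'b"
  assumes "T > 0" and "J > 0"
    and per_t: "\<And>t j. g (t + T) j = g t j" and per_j: "\<And>t j. g t (j + int J) = g t j"
  obtains t' j' where "t' \<in> {0..T}" and "j' \<in> {0..<int J}" and "g t j = g t' j'"
proof
  define k where "k = \<lfloor>t / T\<rfloor>"
  have "of_int k \<le> t / T" "t / T < of_int k + 1"
    unfolding k_def by (rule of_int_floor_le, rule real_of_int_floor_add_one_gt)
  then have "of_int k * T \<le> t" "t < (of_int k + 1) * T"
    using \<open>T > 0\<close> by (simp_all add: pos_le_divide_eq pos_divide_less_eq)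
  then show "t - of_int k * T \<in> {0..T}" by (simp add: algebra_simps)
  show "j mod int J \<in> {0..<int J}" using \<open>J > 0\<close> by simp
  have "g t j = g (t - of_int k * T) j"
    using periodic_shift_int[of "\<lambda>t. g t j" T, OF per_t, of "t - of_int k * T" k] by simp
  also have "\<dots> = g (t - of_int k * T) (j mod int J)"
    using periodic_shift_int[of "g (t - of_int k * T)" "int J", OF per_j, of "j mod int J" "j div int J"]
    by (simp add: mult.commute)
  finally show "g t j = g (t - of_int k * T) (j mod int J)" .
qed

lemma periodic_continuous_bounded_above:
  fixes g :: "real \<Rightarrow> int \<Rightarrow> real"
  assumes "T > 0" and "J > 0"
    and per_t: "\<And>t j. g (t + T) j = g t j" and per_j: "\<And>t j. g t (j + int J) = g t j"
    and cont: "\<And>j. continuous_on {0..T} (\<lambda>t. g t j)"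
  shows "\<exists>Q. \<forall>t j. g t j \<le> Q"
proof -
  have "\<forall>j\<in>{0..<int J}. \<exists>x\<in>{0..T}. \<forall>y\<in>{0..T}. g y j \<le> g x j"
    using continuous_attains_sup[OF _ _ cont] \<open>T > 0\<close> by auto
  then obtain X where X: "\<And>j y. j \<in> {0..<int J} \<Longrightarrow> y \<in> {0..T} \<Longrightarrow> g y j \<le> g (X j) j"
    by metis
  have "g t j \<le> Max ((\<lambda>i. g (X i) i) ` {0..<int J})" for t j
  proof -
    obtain t' j' where r: "t' \<in> {0..T}" "j' \<in> {0..<int J}" "g t j = g t' j'"
      using periodic_representative[where g=g, OF \<open>T > 0\<close> \<open>J > 0\<close> per_t per_j] .
    then have "g t j \<le> g (X j') j'" using X[OF r(2,1)] by simp
    also have "\<dots> \<le> Max ((\<lambda>i. g (X i) i) ` {0..<int J})" using r(2) by (intro Max_ge) auto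
    finally show ?thesis .
  qed
  then show ?thesis by blast
qed

lemma periodic_continuous_pos_bounded_below:
  fixes g :: "real \<Rightarrow> int \<Rightarrow> real"
  assumes "T > 0" and "J > 0"
    and per_t: "\<And>t j. g (t + T) j = g t j" and per_j: "\<And>t j. g t (j + int J) = g t j"
    and cont: "\<And>j. continuous_on {0..T} (\<lambda>t. g t j)" and pos: "\<And>t j. 0 < g t j"
  shows "\<exists>P>0. \<forall>t j. P \<le> g t j"
proof -
  have "\<forall>j\<in>{0..<int J}. \<exists>x\<in>{0..T}. \<forall>y\<in>{0..T}. g x j \<le> g y j"
    using continuous_attains_inf[OF _ _ cont] \<open>T > 0\<close> by auto
  then obtain X where X: "\<And>j y. j \<in> {0..<int J} \<Longrightarrow> y \<in> {0..T} \<Longrightarrow> g (X j) j \<le> g y j"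
    by metis
  define P where "P = Min ((\<lambda>i. g (X i) i) ` {0..<int J})"
  have "0 < P" unfolding P_def using pos \<open>J > 0\<close> by (subst Min_gr_iff) auto
  moreover have "P \<le> g t j" for t j
  proof -
    obtain t' j' where r: "t' \<in> {0..T}" "j' \<in> {0..<int J}" "g t j = g t' j'"
      using periodic_representative[where g=g, OF \<open>T > 0\<close> \<open>J > 0\<close> per_t per_j] .
    have "P \<le> g (X j') j'" using r(2) unfolding P_def by (intro Min_le) auto
    also have "\<dots> \<le> g t j" using X[OF r(2,1)] r(3) by simp
    finally show ?thesis .
  qed
  ultimately show ?thesis by blast
qed

lemma isCont_if_hoelder:
  fixes g :: "real \<Rightarrow> real"
  assumes "0 < \<alpha>" and hoelder: "\<And>s. \<bar>s - t\<bar> \<le> 1 \<Longrightarrow> \<bar>g s - g t\<bar> \<le> C * \<bar>s - t\<bar> powr \<alpha>"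
  shows "isCont g t"
proof -
  have "((\<lambda>s. \<bar>s - t\<bar>) \<longlongrightarrow> 0) (at t)"
    using tendsto_rabs_zero[OF LIM_zero[OF tendsto_ident_at]] .
  then have "((\<lambda>s. C * \<bar>s - t\<bar> powr \<alpha>) \<longlongrightarrow> 0) (at t)"
    using tendsto_mult[OF tendsto_const tendsto_zero_powrI[OF _ tendsto_const]] \<open>0 < \<alpha>\<close> by force
  moreover have "eventually (\<lambda>s. norm (g s - g t) \<le> C * \<bar>s - t\<bar> powr \<alpha>) (at t)"
    unfolding eventually_at using hoelder by (intro exI[of _ 1]) (auto simp: dist_real_def)
  ultimately have "((\<lambda>s. g s - g t) \<longlongrightarrow> 0) (at t)" by (rule Lim_null_comparison[rotated])
  then show ?thesis unfolding isCont_def by (rule LIM_zero_cancel)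
qed

lemma antitone_on_nonneg_if_deriv_nonpos:
  fixes g g' :: "real \<Rightarrow> real"
  assumes der: "\<And>x. 0 \<le> x \<Longrightarrow> (g has_real_derivative g' x) (at x within {0..})"
    and nonpos: "\<And>x. 0 \<le> x \<Longrightarrow> g' x \<le> 0"
    and "0 \<le> u" and "u \<le> v"
  shows "g v \<le> g u"
proof (rule DERIV_nonpos_imp_decreasing_open[OF \<open>u \<le> v\<close>])
  fix x assume "u < x"
  then have "0 \<le> x" and "x \<in> interior {0..}" using \<open>0 \<le> u\<close> by auto
  then have "(g has_real_derivative g' x) (at x)" using der[of x] at_within_interior[of x] by metis
  then show "\<exists>y. (g has_real_derivative y) (at x) \<and> y \<le> 0" using nonpos[OF \<open>0 \<le> x\<close>] by blast
next
  have "continuous (at x within {u..v}) g" if "x \<in> {u..v}" for x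
  proof -
    have "continuous (at x within {0..}) g" using DERIV_continuous[OF der] that \<open>0 \<le> u\<close> by simp
    then show ?thesis by (rule continuous_within_subset) (use \<open>0 \<le> u\<close> in auto)
  qed
  then show "continuous_on {u..v} g" by (simp add: continuous_on_eq_continuous_within)
qed

lemma continuous_if_exp_mult_has_derivative:
  fixes p :: "real \<Rightarrow> real"
  assumes "\<And>t. ((\<lambda>\<tau>. exp (l * \<tau>) * p \<tau>) has_real_derivative D t) (at t)"
  shows "continuous_on UNIV p"
proof -
  have "isCont (\<lambda>\<tau>. exp (- (l * \<tau>)) * (exp (l * \<tau>) * p \<tau>)) t" for t
    using DERIV_isCont[OF assms] by (auto intro!: continuous_intros)
  moreover have "(\<lambda>\<tau>. exp (- (l * \<tau>)) * (exp (l * \<tau>) * p \<tau>)) = p"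
    by (auto simp: exp_minus field_simps)
  ultimately show ?thesis by (metis continuous_at_imp_continuous_on)
qed

section \<open>Exponential fronts\<close>

text \<open>With the principal eigenfunctions \<open>\<psi>\<^sup>\<mu>\<close>, \<open>\<psi>\<^sup>\<mu>\<^sup>'\<close>, \<open>front \<mu> c (\<psi>\<^sup>\<mu>)\<close> and
  \<open>front \<mu>' c (\<psi>\<^sup>\<mu>\<^sup>')\<close> are the functions \<open>\<phi>\<close> and \<open>\<phi>\<^sub>1\<close> of the statement.\<close>

definition front :: "real \<Rightarrow> real \<Rightarrow> (real \<Rightarrow> int \<Rightarrow> real) \<Rightarrow> real \<Rightarrow> int \<Rightarrow> real"
  where "front m c p t j = exp (- m * (of_int j - c * t)) * p t j"

lemma front_has_derivative:
  assumes eig: "((\<lambda>\<tau>. exp (l * \<tau>) * p \<tau> j) has_real_derivative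
      d t (j - 1) * (exp m * (exp (l * t) * p t (j - 1)) - exp (l * t) * p t j)
      + d t (j + 1) * (exp (- m) * (exp (l * t) * p t (j + 1)) - exp (l * t) * p t j)
      + r * (exp (l * t) * p t j)) (at t)"
  shows "((\<lambda>\<tau>. front m c p \<tau> j) has_real_derivative
      (m * c - l) * front m c p t j + lattice_diffusion d t (front m c p t) j + r * front m c p t j) (at t)"
proof -
  define k where "k = m * c - l"
  define q where "q \<tau> i = exp (l * \<tau>) * p \<tau> i" for \<tau> i
  have split: "front m c p \<tau> i = exp (- m * of_int i) * (exp (k * \<tau>) * q \<tau> i)" for \<tau> i
  proof -
    have "exp (- m * (of_int i - c * \<tau>)) = exp (- m * of_int i) * exp (k * \<tau>) * exp (l * \<tau>)"
      by (simp only: mult_exp_exp) (simp add: k_def algebra_simps)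
    then show ?thesis by (simp add: front_def q_def mult.assoc)
  qed
  have shift: "exp (- m * of_int (j - 1)) = exp (- m * of_int j) * exp m"
    "exp (- m * of_int (j + 1)) = exp (- m * of_int j) * exp (- m)"
    by (simp_all only: mult_exp_exp) (simp_all add: algebra_simps)
  define Dq where "Dq = d t (j - 1) * (exp m * q t (j - 1) - q t j)
    + d t (j + 1) * (exp (- m) * q t (j + 1) - q t j) + r * q t j"
  have dq: "((\<lambda>\<tau>. q \<tau> j) has_real_derivative Dq) (at t)" using eig by (simp add: q_def Dq_def)
  have dexp: "((\<lambda>\<tau>. exp (k * \<tau>)) has_real_derivative exp (k * t) * k) (at t)"
    by (auto intro!: derivative_eq_intros)
  have "((\<lambda>\<tau>. exp (- m * of_int j) * (exp (k * \<tau>) * q \<tau> j)) has_real_derivative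
      exp (- m * of_int j) * (exp (k * t) * k * q t j + Dq * exp (k * t))) (at t)"
    by (rule DERIV_cmult[OF DERIV_mult[OF dexp dq]])
  moreover have "(m * c - l) * front m c p t j + lattice_diffusion d t (front m c p t) j + r * front m c p t j
      = exp (- m * of_int j) * (exp (k * t) * k * q t j + Dq * exp (k * t))"
    unfolding lattice_diffusion_def split shift k_def[symmetric] Dq_def by (simp add: algebra_simps)
  ultimately show ?thesis unfolding split by simp
qed

lemma exp_front_difference_pos_imp_pos:
  fixes x \<delta> d1 \<mu> \<mu>' \<psi> \<psi>1 Q P :: real
  assumes "\<mu> < \<mu>'" and "0 < \<delta>" and "0 < \<psi>" "\<psi> \<le> Q" and "0 < P" "P \<le> \<psi>1"
    and dQ: "\<delta> * Q \<le> d1 * P"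
    and pos: "0 < \<delta> * (exp (- \<mu> * x) * \<psi>) - d1 * (exp (- \<mu>' * x) * \<psi>1)"
  shows "0 < x"
proof -
  define e1 e2 where "e1 = exp (- \<mu> * x)" and "e2 = exp (- \<mu>' * x)"
  have "0 < e1" "0 < e2" "0 < Q" using \<open>0 < \<psi>\<close> \<open>\<psi> \<le> Q\<close> by (simp_all add: e1_def e2_def)
  then have "0 < d1 * P" using dQ \<open>0 < \<delta>\<close> by (smt (verit) mult_pos_pos)
  then have "0 \<le> d1" using \<open>0 < P\<close> by (simp add: zero_less_mult_iff)
  have "\<delta> * Q * e2 \<le> d1 * P * e2" using dQ \<open>0 < e2\<close> by simp
  also have "\<dots> = d1 * (e2 * P)" by (simp add: ac_simps)
  also have "\<dots> \<le> d1 * (e2 * \<psi>1)"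
    using \<open>P \<le> \<psi>1\<close> \<open>0 \<le> d1\<close> \<open>0 < e2\<close> by (intro mult_left_mono) auto
  also have "\<dots> < \<delta> * (e1 * \<psi>)" using pos by (simp add: e1_def e2_def)
  also have "\<dots> \<le> \<delta> * (e1 * Q)" using \<open>\<psi> \<le> Q\<close> \<open>0 < \<delta>\<close> \<open>0 < e1\<close> by simp
  finally have "e2 < e1" using \<open>0 < \<delta>\<close> \<open>0 < Q\<close> by (simp add: mult.left_commute)
  then have "0 < (\<mu>' - \<mu>) * x" by (simp add: e1_def e2_def algebra_simps)
  then show "0 < x" using \<open>\<mu> < \<mu>'\<close> by (simp add: zero_less_mult_iff)
qed

lemma exp_front_difference_bounds:
  fixes x \<delta> d1 \<mu> \<mu>' \<psi> \<psi>1 Q P L \<kappa> :: real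
  assumes "0 < \<mu>" "\<mu> < \<mu>'" "\<mu>' \<le> 2 * \<mu>" and "0 < \<delta>" "\<delta> \<le> 2"
    and "0 < \<psi>" "\<psi> \<le> Q" "0 < P" "P \<le> \<psi>1" "0 < \<kappa>" "0 \<le> L"
    and d1: "\<delta> * max (Q / P) (2 * L * Q\<^sup>2 / (\<kappa> * P)) \<le> d1"
    and pos: "0 < \<delta> * (exp (- \<mu> * x) * \<psi>) - d1 * (exp (- \<mu>' * x) * \<psi>1)"
  shows "\<delta> * (exp (- \<mu> * x) * \<psi>) - d1 * (exp (- \<mu>' * x) * \<psi>1) \<le> 2 * Q"
    and "L * (\<delta> * (exp (- \<mu> * x) * \<psi>) - d1 * (exp (- \<mu>' * x) * \<psi>1))\<^sup>2
      \<le> d1 * \<kappa> * (exp (- \<mu>' * x) * \<psi>1)"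
proof -
  define e1 e2 where "e1 = exp (- \<mu> * x)" and "e2 = exp (- \<mu>' * x)"
  define V where "V = \<delta> * (e1 * \<psi>) - d1 * (e2 * \<psi>1)"
  have "0 < e1" "0 < e2" "0 < Q" using \<open>0 < \<psi>\<close> \<open>\<psi> \<le> Q\<close> by (simp_all add: e1_def e2_def)
  have "\<delta> * (Q / P) \<le> \<delta> * max (Q / P) (2 * L * Q\<^sup>2 / (\<kappa> * P))"
    using \<open>0 < \<delta>\<close> by (intro mult_left_mono) auto
  then have "\<delta> * (Q / P) \<le> d1" using d1 by linarith
  then have "\<delta> * Q \<le> d1 * P" using \<open>0 < P\<close> by (simp add: field_simps)
  then have "0 < x" using exp_front_difference_pos_imp_pos assms(2,4,6-9) pos by blast
  have "0 \<le> d1" using \<open>\<delta> * Q \<le> d1 * P\<close> \<open>0 < \<delta>\<close> \<open>0 < Q\<close> \<open>0 < P\<close>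
    by (smt (verit) mult_pos_pos zero_less_mult_iff)
  have "e1 \<le> 1" using \<open>0 < x\<close> \<open>0 < \<mu>\<close> by (simp add: e1_def)
  have "e1\<^sup>2 \<le> e2"
    using \<open>0 < x\<close> \<open>\<mu>' \<le> 2 * \<mu>\<close> by (simp add: e1_def e2_def power2_eq_square flip: exp_add)
  have "0 \<le> d1 * (e2 * \<psi>1)" using \<open>0 \<le> d1\<close> \<open>0 < e2\<close> \<open>0 < P\<close> \<open>P \<le> \<psi>1\<close> by simp
  moreover have "\<delta> * (e1 * \<psi>) \<le> \<delta> * (e1 * Q)" using \<open>\<psi> \<le> Q\<close> \<open>0 < \<delta>\<close> \<open>0 < e1\<close> by simp
  ultimately have V_le: "V \<le> \<delta> * e1 * Q" by (simp add: V_def mult.assoc)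
  have "\<delta> * e1 \<le> \<delta> * 1" using \<open>e1 \<le> 1\<close> \<open>0 < \<delta>\<close> by (intro mult_left_mono) auto
  then have "\<delta> * e1 \<le> 2" using \<open>\<delta> \<le> 2\<close> by simp
  then have "\<delta> * e1 * Q \<le> 2 * Q" using \<open>0 < Q\<close> by (intro mult_right_mono) auto
  then have "V \<le> 2 * Q" using V_le by linarith
  then show "\<delta> * (exp (- \<mu> * x) * \<psi>) - d1 * (exp (- \<mu>' * x) * \<psi>1) \<le> 2 * Q"
    by (simp add: V_def e1_def e2_def)
  have "0 < V" using pos by (simp add: V_def e1_def e2_def)
  then have "V\<^sup>2 \<le> (\<delta> * e1 * Q)\<^sup>2" using V_le by (intro power_mono) auto
  also have "\<dots> = \<delta>\<^sup>2 * e1\<^sup>2 * Q\<^sup>2" by (simp add: power_mult_distrib)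
  also have "\<dots> \<le> (2 * \<delta>) * e2 * Q\<^sup>2"
  proof -
    have "\<delta>\<^sup>2 \<le> 2 * \<delta>" using \<open>0 < \<delta>\<close> \<open>\<delta> \<le> 2\<close> by (simp add: power2_eq_square mult_right_mono)
    then have "\<delta>\<^sup>2 * e1\<^sup>2 \<le> (2 * \<delta>) * e2" using \<open>e1\<^sup>2 \<le> e2\<close> \<open>0 < \<delta>\<close> by (intro mult_mono) auto
    then show ?thesis by (intro mult_right_mono) auto
  qed
  finally have "L * V\<^sup>2 \<le> L * ((2 * \<delta>) * e2 * Q\<^sup>2)" using \<open>0 \<le> L\<close> by (rule mult_left_mono)
  also have "\<dots> = \<delta> * (2 * L * Q\<^sup>2 / (\<kappa> * P)) * (\<kappa> * P * e2)"
    using \<open>0 < \<kappa>\<close> \<open>0 < P\<close> by (simp add: field_simps)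
  also have "\<dots> \<le> d1 * (\<kappa> * P * e2)"
  proof (rule mult_right_mono)
    have "\<delta> * (2 * L * Q\<^sup>2 / (\<kappa> * P)) \<le> \<delta> * max (Q / P) (2 * L * Q\<^sup>2 / (\<kappa> * P))"
      using \<open>0 < \<delta>\<close> by (intro mult_left_mono) auto
    then show "\<delta> * (2 * L * Q\<^sup>2 / (\<kappa> * P)) \<le> d1" using d1 by linarith
  qed (use \<open>0 < \<kappa>\<close> \<open>0 < P\<close> \<open>0 < e2\<close> in simp)
  also have "\<dots> \<le> d1 * \<kappa> * (e2 * \<psi>1)"
    using \<open>P \<le> \<psi>1\<close> \<open>0 \<le> d1\<close> \<open>0 < \<kappa>\<close> \<open>0 < e2\<close> by (simp add: mult.assoc mult_left_mono)
  finally show "L * (\<delta> * (exp (- \<mu> * x) * \<psi>) - d1 * (exp (- \<mu>' * x) * \<psi>1))\<^sup>2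
      \<le> d1 * \<kappa> * (exp (- \<mu>' * x) * \<psi>1)"
    by (simp add: V_def e1_def e2_def)
qed

section \<open>Comparison for (E)\<close>

lemma solution_bounded:
  assumes "is_solution_E d f t0 u0 u" and "t0 \<le> t"
  obtains Bu where "\<And>s i. s \<in> {t0..t} \<Longrightarrow> \<bar>u s i\<bar> \<le> Bu"
  using assms unfolding is_solution_E_def by blast

locale lattice_kpp =
  fixes d :: "real \<Rightarrow> int \<Rightarrow> real" and f :: "real \<Rightarrow> int \<Rightarrow> real \<Rightarrow> real" and A :: real
  assumes d_nonneg: "\<And>t j. 0 \<le> d t j" and d_le: "\<And>t j. d t j \<le> A"
    and f_antitone: "\<And>t j v w. 0 \<le> v \<Longrightarrow> v \<le> w \<Longrightarrow> f t j w \<le> f t j v"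
    and f_nonpos_arg: "\<And>t j v. v \<le> 0 \<Longrightarrow> f t j v = f t j 0"
    and f_bounded_above: "\<And>B. \<exists>F. \<forall>t j v. \<bar>v\<bar> \<le> B \<longrightarrow> f t j v \<le> F"
begin

lemma reaction_mono: "w \<le> v \<Longrightarrow> v * (f t j v - f t j w) \<le> 0"
proof (cases "0 \<le> v")
  case True
  assume "w \<le> v"
  have "f t j v \<le> f t j w"
  proof (cases "0 \<le> w")
    case False
    then show ?thesis using f_antitone[OF order_refl True] f_nonpos_arg[of w] by simp
  qed (use f_antitone \<open>w \<le> v\<close> in auto)
  then show ?thesis using True by (simp add: mult_nonneg_nonpos)
next
  case False
  assume "w \<le> v"
  then show ?thesis using False f_nonpos_arg[of v] f_nonpos_arg[of w] by simp
qed

lemma subsolution_le_solution: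
  assumes sol: "is_solution_E d f t0 u0 u"
    and V_der: "\<And>t j. t0 \<le> t \<Longrightarrow> ((\<lambda>\<tau>. V \<tau> j) has_real_derivative V' t j) (at t within {t0..})"
    and V_sub: "\<And>t j. t0 \<le> t \<Longrightarrow> V' t j \<le> E_rhs d f t (V t) j"
    and V_bdd: "\<And>t j. t0 \<le> t \<Longrightarrow> V t j \<le> B"
    and init: "\<And>j. V t0 j \<le> u0 j"
    and "t0 \<le> t"
  shows "V t j \<le> u t j"
proof -
  obtain Bu where Bu: "\<And>s i. s \<in> {t0..t} \<Longrightarrow> \<bar>u s i\<bar> \<le> Bu"
    using solution_bounded[OF sol \<open>t0 \<le> t\<close>] by blast
  obtain F where F: "\<And>s i v. \<bar>v\<bar> \<le> Bu \<Longrightarrow> f s i v \<le> F" using f_bounded_above by blast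
  have "V t j - u t j \<le> 0"
  proof (rule lattice_maximum_principle[where w="\<lambda>s i. V s i - u s i"
        and w'="\<lambda>s i. V' s i - E_rhs d f s (u s) i" and a=d and A=A and B="B + Bu" and C=F])
    fix s i assume s: "s \<in> {t0..t}"
    show "0 \<le> d s i \<and> d s i \<le> A" using d_nonneg d_le by blast
    show "V s i - u s i \<le> B + Bu" using V_bdd[of s i] Bu[OF s, of i] s by auto
    show "((\<lambda>\<tau>. V \<tau> i - u \<tau> i) has_real_derivative V' s i - E_rhs d f s (u s) i) (at s within {t0..})"
      using V_der[of s i] sol s unfolding is_solution_E_def by (auto intro!: DERIV_diff)
    assume "0 < V s i - u s i"
    have "V s i * f s i (V s i) - u s i * f s i (u s i)
        = f s i (u s i) * (V s i - u s i) + V s i * (f s i (V s i) - f s i (u s i))"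
      by (simp add: algebra_simps)
    also have "\<dots> \<le> F * (V s i - u s i)"
      using F[OF Bu[OF s]] reaction_mono[of "u s i" "V s i"] \<open>0 < V s i - u s i\<close>
      by (smt (verit) mult_right_mono)
    finally show "V' s i - E_rhs d f s (u s) i
        \<le> lattice_diffusion d s (\<lambda>i. V s i - u s i) i + F * (V s i - u s i)"
      using V_sub[of s i] s unfolding E_rhs_eq lattice_diffusion_diff by auto
  qed (use sol init \<open>t0 \<le> t\<close> in \<open>auto simp: is_solution_E_def\<close>)
  then show ?thesis by simp
qed

text \<open>Here the reaction difference carries the smaller argument \<open>S\<close> as factor, not the larger one as
  in \<open>reaction_mono\<close>; this is why the supersolution has to be nonnegative.\<close>

lemma solution_le_supersolution:
  assumes sol: "is_solution_E d f t0 u0 u"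
    and S_der: "\<And>t j. t0 \<le> t \<Longrightarrow> ((\<lambda>\<tau>. S \<tau> j) has_real_derivative S' t j) (at t within {t0..})"
    and S_super: "\<And>t j. t0 \<le> t \<Longrightarrow> E_rhs d f t (S t) j \<le> S' t j"
    and S_nonneg: "\<And>t j. t0 \<le> t \<Longrightarrow> 0 \<le> S t j"
    and init: "\<And>j. u0 j \<le> S t0 j"
    and "t0 \<le> t"
  shows "u t j \<le> S t j"
proof -
  obtain Bu where Bu: "\<And>s i. s \<in> {t0..t} \<Longrightarrow> \<bar>u s i\<bar> \<le> Bu"
    using solution_bounded[OF sol \<open>t0 \<le> t\<close>] by blast
  obtain F where F: "\<And>s i v. \<bar>v\<bar> \<le> Bu \<Longrightarrow> f s i v \<le> F" using f_bounded_above by blast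
  have "u t j - S t j \<le> 0"
  proof (rule lattice_maximum_principle[where w="\<lambda>s i. u s i - S s i"
        and w'="\<lambda>s i. E_rhs d f s (u s) i - S' s i" and a=d and A=A and B=Bu and C=F])
    fix s i assume s: "s \<in> {t0..t}"
    show "0 \<le> d s i \<and> d s i \<le> A" using d_nonneg d_le by blast
    show "u s i - S s i \<le> Bu" using S_nonneg[of s i] Bu[OF s, of i] s by auto
    show "((\<lambda>\<tau>. u \<tau> i - S \<tau> i) has_real_derivative E_rhs d f s (u s) i - S' s i) (at s within {t0..})"
      using S_der[of s i] sol s unfolding is_solution_E_def by (auto intro!: DERIV_diff)
    assume "0 < u s i - S s i"
    have "u s i * f s i (u s i) - S s i * f s i (S s i)
        = f s i (u s i) * (u s i - S s i) + S s i * (f s i (u s i) - f s i (S s i))"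
      by (simp add: algebra_simps)
    also have "\<dots> \<le> F * (u s i - S s i)"
      using F[OF Bu[OF s]] f_antitone[where t=s and j=i and v="S s i" and w="u s i"] S_nonneg[of s i] s
        \<open>0 < u s i - S s i\<close>
      by (smt (verit) mult_nonneg_nonpos mult_right_mono atLeastAtMost_iff)
    finally show "E_rhs d f s (u s) i - S' s i
        \<le> lattice_diffusion d s (\<lambda>i. u s i - S s i) i + F * (u s i - S s i)"
      using S_super[of s i] s unfolding E_rhs_eq lattice_diffusion_diff by auto
  qed (use sol init \<open>t0 \<le> t\<close> in \<open>auto simp: is_solution_E_def\<close>)
  then show ?thesis by simp
qed

end

locale lattice_kpp_fronts = lattice_kpp +
  fixes \<phi> \<phi>1 :: "real \<Rightarrow> int \<Rightarrow> real" and \<kappa> :: real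
  assumes \<phi>_nonneg: "\<And>t j. 0 \<le> \<phi> t j" and \<phi>1_nonneg: "\<And>t j. 0 \<le> \<phi>1 t j" and \<kappa>_nonneg: "0 \<le> \<kappa>"
    and \<phi>_der: "\<And>t j. ((\<lambda>\<tau>. \<phi> \<tau> j) has_real_derivative
        lattice_diffusion d t (\<phi> t) j + f t j 0 * \<phi> t j) (at t)"
    and \<phi>1_der: "\<And>t j. ((\<lambda>\<tau>. \<phi>1 \<tau> j) has_real_derivative
        \<kappa> * \<phi>1 t j + lattice_diffusion d t (\<phi>1 t) j + f t j 0 * \<phi>1 t j) (at t)"
begin

lemma solution_le_front_sum:
  assumes sol: "is_solution_E d f t0 u0 u" and "0 \<le> \<delta>" and "0 \<le> d1"
    and init: "\<And>j. u0 j \<le> \<delta> * \<phi> t0 j + d1 * \<phi>1 t0 j" and "t0 \<le> t"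
  shows "u t j \<le> \<delta> * \<phi> t j + d1 * \<phi>1 t j"
proof (rule solution_le_supersolution[where S="\<lambda>t j. \<delta> * \<phi> t j + d1 * \<phi>1 t j" and S'="\<lambda>t j.
      \<delta> * (lattice_diffusion d t (\<phi> t) j + f t j 0 * \<phi> t j)
      + d1 * (\<kappa> * \<phi>1 t j + lattice_diffusion d t (\<phi>1 t) j + f t j 0 * \<phi>1 t j)", OF sol _ _ _ init \<open>t0 \<le> t\<close>])
  fix t j
  show "((\<lambda>\<tau>. \<delta> * \<phi> \<tau> j + d1 * \<phi>1 \<tau> j) has_real_derivative
      \<delta> * (lattice_diffusion d t (\<phi> t) j + f t j 0 * \<phi> t j)
      + d1 * (\<kappa> * \<phi>1 t j + lattice_diffusion d t (\<phi>1 t) j + f t j 0 * \<phi>1 t j)) (at t within {t0..})"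
    using DERIV_add[OF DERIV_cmult[OF \<phi>_der] DERIV_cmult[OF \<phi>1_der]] by (rule has_field_derivative_at_within)
  define S where "S = \<delta> * \<phi> t j + d1 * \<phi>1 t j"
  have "0 \<le> S" using \<phi>_nonneg \<phi>1_nonneg \<open>0 \<le> \<delta>\<close> \<open>0 \<le> d1\<close> by (simp add: S_def)
  then show "0 \<le> \<delta> * \<phi> t j + d1 * \<phi>1 t j" by (simp add: S_def)
  have "S * f t j S \<le> S * f t j 0" using f_antitone[OF order_refl \<open>0 \<le> S\<close>] \<open>0 \<le> S\<close>
    by (simp add: mult_left_mono)
  moreover have "0 \<le> d1 * \<kappa> * \<phi>1 t j" using \<open>0 \<le> d1\<close> \<kappa>_nonneg \<phi>1_nonneg by simp
  ultimately show "E_rhs d f t (\<lambda>j. \<delta> * \<phi> t j + d1 * \<phi>1 t j) j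
      \<le> \<delta> * (lattice_diffusion d t (\<phi> t) j + f t j 0 * \<phi> t j)
        + d1 * (\<kappa> * \<phi>1 t j + lattice_diffusion d t (\<phi>1 t) j + f t j 0 * \<phi>1 t j)"
    unfolding E_rhs_eq lattice_diffusion_linear S_def by (simp add: algebra_simps)
qed

lemma front_difference_le_solution:
  assumes sol: "is_solution_E d f t0 u0 u" and "0 \<le> d1"
    and lip: "\<And>t j v. 0 < v \<Longrightarrow> v \<le> B \<Longrightarrow> f t j 0 - f t j v \<le> L * v"
    and small: "\<And>t j. 0 < \<delta> * \<phi> t j - d1 * \<phi>1 t j \<Longrightarrow>
        \<delta> * \<phi> t j - d1 * \<phi>1 t j \<le> B \<and> L * (\<delta> * \<phi> t j - d1 * \<phi>1 t j)\<^sup>2 \<le> d1 * \<kappa> * \<phi>1 t j"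
    and init: "\<And>j. \<delta> * \<phi> t0 j - d1 * \<phi>1 t0 j \<le> u0 j" and "t0 \<le> t"
  shows "\<delta> * \<phi> t j - d1 * \<phi>1 t j \<le> u t j"
proof (rule subsolution_le_solution[where B="max B 0"
      and V="\<lambda>t j. \<delta> * \<phi> t j - d1 * \<phi>1 t j" and V'="\<lambda>t j.
      \<delta> * (lattice_diffusion d t (\<phi> t) j + f t j 0 * \<phi> t j)
      - d1 * (\<kappa> * \<phi>1 t j + lattice_diffusion d t (\<phi>1 t) j + f t j 0 * \<phi>1 t j)", OF sol _ _ _ init \<open>t0 \<le> t\<close>])
  fix t j
  show "((\<lambda>\<tau>. \<delta> * \<phi> \<tau> j - d1 * \<phi>1 \<tau> j) has_real_derivative
      \<delta> * (lattice_diffusion d t (\<phi> t) j + f t j 0 * \<phi> t j)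
      - d1 * (\<kappa> * \<phi>1 t j + lattice_diffusion d t (\<phi>1 t) j + f t j 0 * \<phi>1 t j)) (at t within {t0..})"
    using DERIV_diff[OF DERIV_cmult[OF \<phi>_der] DERIV_cmult[OF \<phi>1_der]] by (rule has_field_derivative_at_within)
  define V where "V = \<delta> * \<phi> t j - d1 * \<phi>1 t j"
  have small_V: "0 < V \<Longrightarrow> V \<le> B \<and> L * V\<^sup>2 \<le> d1 * \<kappa> * \<phi>1 t j" using small unfolding V_def .
  then show "\<delta> * \<phi> t j - d1 * \<phi>1 t j \<le> max B 0" unfolding V_def[symmetric] by fastforce
  have "V * (f t j 0 - f t j V) \<le> d1 * \<kappa> * \<phi>1 t j"
  proof (cases "0 < V")
    case True
    then have "V * (f t j 0 - f t j V) \<le> V * (L * V)"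
      using lip[OF True] small_V by (intro mult_left_mono) auto
    also have "\<dots> = L * V\<^sup>2" by (simp add: power2_eq_square)
    finally show ?thesis using small_V[OF True] by simp
  next
    case False
    then show ?thesis using f_nonpos_arg[of V] \<open>0 \<le> d1\<close> \<kappa>_nonneg \<phi>1_nonneg by simp
  qed
  then show "\<delta> * (lattice_diffusion d t (\<phi> t) j + f t j 0 * \<phi> t j)
        - d1 * (\<kappa> * \<phi>1 t j + lattice_diffusion d t (\<phi>1 t) j + f t j 0 * \<phi>1 t j)
      \<le> E_rhs d f t (\<lambda>j. \<delta> * \<phi> t j - d1 * \<phi>1 t j) j"
    unfolding E_rhs_eq lattice_diffusion_linear V_def by (simp add: algebra_simps)
qed

end

lemma front_comparison:
  fixes p p1 :: "real \<Rightarrow> int \<Rightarrow> real"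
  assumes fronts: "lattice_kpp_fronts d f A (front \<mu> c p) (front \<mu>' c p1) \<kappa>"
    and "0 < \<mu>" "\<mu> < \<mu>'" "\<mu>' \<le> 2 * \<mu>" "0 < \<kappa>"
    and p: "\<And>t j. 0 < p t j" "\<And>t j. p t j \<le> Q" and "0 < P" and p1: "\<And>t j. P \<le> p1 t j"
    and lip: "\<And>t j u v. \<bar>u\<bar> \<le> 2 * Q \<Longrightarrow> \<bar>v\<bar> \<le> 2 * Q \<Longrightarrow> \<bar>f t j u - f t j v\<bar> \<le> L * \<bar>u - v\<bar>"
    and \<delta>: "0 < \<delta>" "\<delta> \<le> 2" and d1: "\<delta> * max (Q / P) (2 * \<bar>L\<bar> * Q\<^sup>2 / (\<kappa> * P)) \<le> d1"
    and sol: "is_solution_E d f t0 u0 u" and "t0 \<le> t"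
  shows "(\<And>j. u0 j \<le> \<delta> * front \<mu> c p t0 j + d1 * front \<mu>' c p1 t0 j) \<Longrightarrow>
      u t j \<le> \<delta> * front \<mu> c p t j + d1 * front \<mu>' c p1 t j"
    and "(\<And>j. \<delta> * front \<mu> c p t0 j - d1 * front \<mu>' c p1 t0 j \<le> u0 j) \<Longrightarrow>
      \<delta> * front \<mu> c p t j - d1 * front \<mu>' c p1 t j \<le> u t j"
proof -
  interpret lattice_kpp_fronts d f A "front \<mu> c p" "front \<mu>' c p1" \<kappa> by (fact fronts)
  have "0 < Q / P" using p[of 0 0] \<open>0 < P\<close> by simp
  then have "0 \<le> d1" using d1 \<delta> by (smt (verit) max.cobounded1 mult_pos_pos)
  show "(\<And>j. u0 j \<le> \<delta> * front \<mu> c p t0 j + d1 * front \<mu>' c p1 t0 j) \<Longrightarrow>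
      u t j \<le> \<delta> * front \<mu> c p t j + d1 * front \<mu>' c p1 t j"
    using solution_le_front_sum[OF sol _ \<open>0 \<le> d1\<close> _ \<open>t0 \<le> t\<close>] \<delta> by simp
  have "\<delta> * front \<mu> c p s i - d1 * front \<mu>' c p1 s i \<le> 2 * Q \<and>
      \<bar>L\<bar> * (\<delta> * front \<mu> c p s i - d1 * front \<mu>' c p1 s i)\<^sup>2 \<le> d1 * \<kappa> * front \<mu>' c p1 s i"
    if "0 < \<delta> * front \<mu> c p s i - d1 * front \<mu>' c p1 s i" for s i
    using exp_front_difference_bounds[OF assms(2-4) \<delta> p(1)[of s i] p(2)[of s i] \<open>0 < P\<close> p1[of s i]
        \<open>0 < \<kappa>\<close> abs_ge_zero d1] that
    unfolding front_def by blast
  moreover have "f s i 0 - f s i v \<le> \<bar>L\<bar> * v" if "0 < v" "v \<le> 2 * Q" for s i v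
    using lip[of v 0 s i] that abs_ge_self[of L] by (smt (verit) mult_right_mono)
  ultimately show "(\<And>j. \<delta> * front \<mu> c p t0 j - d1 * front \<mu>' c p1 t0 j \<le> u0 j) \<Longrightarrow>
      \<delta> * front \<mu> c p t j - d1 * front \<mu>' c p1 t j \<le> u t j"
    using front_difference_le_solution[OF sol \<open>0 \<le> d1\<close>] \<open>t0 \<le> t\<close> by blast
qed

section \<open>The periodic setting\<close>

lemma lattice_kpp_if_H0:
  fixes d :: "real \<Rightarrow> int \<Rightarrow> real" and f fu :: "real \<Rightarrow> int \<Rightarrow> real \<Rightarrow> real"
  assumes "T > 0" and "J > 0"
    and d_bdd: "\<exists>B. \<forall>t j. \<bar>d t j\<bar> \<le> B" and d_inf_pos: "\<exists>m>0. \<forall>t j. d t j \<ge> m"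
    and per_t: "\<And>t j u. f (t + T) j u = f t j u" and per_j: "\<And>t j u. f t (j + int J) u = f t j u"
    and hoelder: "\<And>K. \<exists>\<alpha> C. 0 < \<alpha> \<and> \<alpha> \<le> 1 \<and>
         (\<forall>t s j u. \<bar>u\<bar> \<le> K \<longrightarrow> \<bar>t - s\<bar> \<le> 1 \<longrightarrow> \<bar>f t j u - f s j u\<bar> \<le> C * \<bar>t - s\<bar> powr \<alpha>)"
    and lip: "\<And>K. \<exists>L. \<forall>t j u v. \<bar>u\<bar> \<le> K \<longrightarrow> \<bar>v\<bar> \<le> K \<longrightarrow> \<bar>f t j u - f t j v\<bar> \<le> L * \<bar>u - v\<bar>"
    and der: "\<And>t j u. 0 \<le> u \<Longrightarrow> (f t j has_real_derivative fu t j u) (at u within {0..})"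
    and der_neg: "\<And>t j u. 0 \<le> u \<Longrightarrow> fu t j u < 0"
    and nonpos_arg: "\<And>t j u. u \<le> 0 \<Longrightarrow> f t j u = f t j 0"
  obtains A where "lattice_kpp d f A"
proof -
  obtain A where A: "\<And>t j. d t j \<le> A" using d_bdd abs_le_D1 by metis
  have "lattice_kpp d f A"
  proof
    show "0 \<le> d t j" and "d t j \<le> A" for t j using d_inf_pos A by (meson less_le_trans less_imp_le)+
    show "f t j w \<le> f t j v" if "0 \<le> v" "v \<le> w" for t j v w
      by (rule antitone_on_nonneg_if_deriv_nonpos[where g="f t j" and g'="fu t j",
            OF der less_imp_le[OF der_neg] that])
    show "f t j v = f t j 0" if "v \<le> 0" for t j v using nonpos_arg[OF that] .
    fix B :: real
    obtain \<alpha> C where "0 < \<alpha>"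
      and "\<forall>t s j u. \<bar>u\<bar> \<le> 0 \<longrightarrow> \<bar>t - s\<bar> \<le> 1 \<longrightarrow> \<bar>f t j u - f s j u\<bar> \<le> C * \<bar>t - s\<bar> powr \<alpha>"
      using hoelder[of 0] by blast
    then have C: "\<And>t s j. \<bar>t - s\<bar> \<le> 1 \<Longrightarrow> \<bar>f t j 0 - f s j 0\<bar> \<le> C * \<bar>t - s\<bar> powr \<alpha>" by simp
    have "isCont (\<lambda>s. f s j 0) t" for t j using isCont_if_hoelder[OF \<open>0 < \<alpha>\<close> C] .
    then have "continuous_on {0..T} (\<lambda>t. f t j 0)" for j by (simp add: continuous_at_imp_continuous_on)
    then obtain F0 where F0: "\<And>t j. f t j 0 \<le> F0"
      using periodic_continuous_bounded_above[where g="\<lambda>t j. f t j 0", OF \<open>T > 0\<close> \<open>J > 0\<close> per_t per_j]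
      by blast
    obtain L where L: "\<And>t j u v. \<bar>u\<bar> \<le> \<bar>B\<bar> \<Longrightarrow> \<bar>v\<bar> \<le> \<bar>B\<bar> \<Longrightarrow> \<bar>f t j u - f t j v\<bar> \<le> L * \<bar>u - v\<bar>"
      using lip[of "\<bar>B\<bar>"] by blast
    have "f t j v \<le> F0 + \<bar>L\<bar> * \<bar>B\<bar>" if "\<bar>v\<bar> \<le> B" for t j v
    proof -
      have "L * \<bar>v\<bar> \<le> \<bar>L\<bar> * \<bar>B\<bar>" using that by (intro mult_mono) auto
      moreover have "\<bar>f t j v - f t j 0\<bar> \<le> L * \<bar>v\<bar>" using L[of v 0 t j] that by simp
      ultimately show ?thesis using F0[of t j] by linarith
    qed
    then show "\<exists>F. \<forall>t j v. \<bar>v\<bar> \<le> B \<longrightarrow> f t j v \<le> F" by blast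
  qed
  then show thesis by (rule that)
qed

lemma lattice_kpp_fronts_if_eigenfunctions:
  assumes "lattice_kpp d f A" and psi_pos: "\<And>m t j. 0 < psi m t j"
    and psi_eig: "\<And>m t j. ((\<lambda>\<tau>. exp (lam m * \<tau>) * psi m \<tau> j) has_real_derivative
         (d t (j - 1) * (exp m * (exp (lam m * t) * psi m t (j - 1)) - exp (lam m * t) * psi m t j)
          + d t (j + 1) * (exp (- m) * (exp (lam m * t) * psi m t (j + 1)) - exp (lam m * t) * psi m t j)
          + f t j 0 * (exp (lam m * t) * psi m t j))) (at t)"
    and "\<mu> * c = lam \<mu>" and "lam \<mu>' \<le> \<mu>' * c"
  shows "lattice_kpp_fronts d f A (front \<mu> c (psi \<mu>)) (front \<mu>' c (psi \<mu>')) (\<mu>' * c - lam \<mu>')"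
proof -
  have der: "((\<lambda>\<tau>. front m c (psi m) \<tau> j) has_real_derivative (m * c - lam m) * front m c (psi m) t j
      + lattice_diffusion d t (front m c (psi m) t) j + f t j 0 * front m c (psi m) t j) (at t)" for m t j
    by (rule front_has_derivative) (rule psi_eig)
  show ?thesis
  proof (intro lattice_kpp_fronts.intro assms(1) lattice_kpp_fronts_axioms.intro)
    show "0 \<le> front \<mu> c (psi \<mu>) t j" and "0 \<le> front \<mu>' c (psi \<mu>') t j" for t j
      using psi_pos by (simp_all add: front_def less_imp_le)
    show "0 \<le> \<mu>' * c - lam \<mu>'" using \<open>lam \<mu>' \<le> \<mu>' * c\<close> by simp
    show "((\<lambda>\<tau>. front \<mu> c (psi \<mu>) \<tau> j) has_real_derivative
        lattice_diffusion d t (front \<mu> c (psi \<mu>) t) j + f t j 0 * front \<mu> c (psi \<mu>) t j) (at t)" for t j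
      using der[of \<mu> j t] \<open>\<mu> * c = lam \<mu>\<close> by simp
  qed (rule der)
qed

lemma periodic_eigenfunctions_bounds:
  fixes psi :: "real \<Rightarrow> real \<Rightarrow> int \<Rightarrow> real"
  assumes "T > 0" and "J > 0" and pos: "\<And>m t j. 0 < psi m t j"
    and per: "\<And>m t j. psi m (t + T) j = psi m t j" "\<And>m t j. psi m t (j + int J) = psi m t j"
    and der: "\<And>m t j. ((\<lambda>\<tau>. exp (l m * \<tau>) * psi m \<tau> j) has_real_derivative D m t j) (at t)"
  obtains Q P where "\<And>t j. psi \<mu> t j \<le> Q" and "0 < P" and "\<And>t j. P \<le> psi \<mu>' t j"
proof -
  have cont: "continuous_on {0..T} (\<lambda>t. psi m t j)" for m j
    using continuous_if_exp_mult_has_derivative[OF der] continuous_on_subset by blast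
  obtain Q where "\<And>t j. psi \<mu> t j \<le> Q"
    using periodic_continuous_bounded_above[where g="psi \<mu>", OF \<open>T > 0\<close> \<open>J > 0\<close> per cont] by blast
  moreover obtain P where "0 < P" and "\<And>t j. P \<le> psi \<mu>' t j"
    using periodic_continuous_pos_bounded_below[where g="psi \<mu>'", OF \<open>T > 0\<close> \<open>J > 0\<close> per cont pos]
    by blast
  ultimately show thesis by (rule that)
qed

theorem proposition3p4:
  fixes d :: "real \<Rightarrow> int \<Rightarrow> real"
    and f :: "real \<Rightarrow> int \<Rightarrow> real \<Rightarrow> real"
    and fu :: "real \<Rightarrow> int \<Rightarrow> real \<Rightarrow> real"
    and T :: real and J :: nat and M0 :: real
    and lam :: "real \<Rightarrow> real"
    and psi :: "real \<Rightarrow> real \<Rightarrow> int \<Rightarrow> real"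
    and \<mu>s cs c \<mu> \<mu>' :: real
  assumes T_pos: "T > 0" and J_pos: "J > 0"
    and d_bdd: "\<exists>B. \<forall>t j. \<bar>d t j\<bar> \<le> B"
    and d_inf_pos: "\<exists>m>0. \<forall>t j. d t j \<ge> m"
    and d_per: "\<And>t j. d (t + T) j = d t j" "\<And>t j. d t (j + int J) = d t j"
    and f_per: "\<And>t j u. f (t + T) j u = f t j u" "\<And>t j u. f t (j + int J) u = f t j u"
    and H0_hoelder: "\<And>K. \<exists>\<alpha> C. 0 < \<alpha> \<and> \<alpha> \<le> 1 \<and>
         (\<forall>t s j u. \<bar>u\<bar> \<le> K \<longrightarrow> \<bar>t - s\<bar> \<le> 1 \<longrightarrow> \<bar>f t j u - f s j u\<bar> \<le> C * \<bar>t - s\<bar> powr \<alpha>)"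
    and H0_lip: "\<And>K. \<exists>L. \<forall>t j u v. \<bar>u\<bar> \<le> K \<longrightarrow> \<bar>v\<bar> \<le> K \<longrightarrow> \<bar>f t j u - f t j v\<bar> \<le> L * \<bar>u - v\<bar>"
    and H0_C1: "\<And>t j u. u \<ge> 0 \<Longrightarrow> ((\<lambda>v. f t j v) has_real_derivative fu t j u) (at u within {0..})"
    and H0_C1_cont: "\<And>t j. continuous_on {0..} (fu t j)"
    and H0_neg: "\<And>t j u. u \<le> 0 \<Longrightarrow> f t j u = f t j 0"
    and H0_M0: "\<And>t j u. u \<ge> M0 \<Longrightarrow> f t j u < 0"
    and H0_fu: "\<And>t j u. u \<ge> 0 \<Longrightarrow> fu t j u < 0"
    and H0_liminf: "\<exists>a>0. \<exists>L. \<forall>s t. t - s \<ge> L \<longrightarrow>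
         integral {s..t} (\<lambda>\<tau>. INF j. f \<tau> j 0) \<ge> a * (t - s)"
    and psi_pos: "\<And>m t j. psi m t j > 0"
    and psi_per: "\<And>m t j. psi m (t + T) j = psi m t j" "\<And>m t j. psi m t (j + int J) = psi m t j"
    and psi_norm: "\<And>m. (SUP j. psi m 0 j) = 1"
    and psi_eig: "\<And>m t j. ((\<lambda>\<tau>. exp (lam m * \<tau>) * psi m \<tau> j) has_real_derivative
         (d t (j - 1) * (exp m * (exp (lam m * t) * psi m t (j - 1)) - exp (lam m * t) * psi m t j)
          + d t (j + 1) * (exp (- m) * (exp (lam m * t) * psi m t (j + 1)) - exp (lam m * t) * psi m t j)
          + f t j 0 * (exp (lam m * t) * psi m t j))) (at t)"
    and mus_pos: "\<mu>s > 0"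
    and mus_min: "\<And>m. m > 0 \<Longrightarrow> lam \<mu>s / \<mu>s \<le> lam m / m"
    and cs_def: "cs = lam \<mu>s / \<mu>s"
    and c_gt: "c > cs"
    and mu_bounds: "0 < \<mu>" "\<mu> < \<mu>'" "\<mu>' < min (2 * \<mu>) \<mu>s"
    and c_eq: "c = lam \<mu> / \<mu>"
    and ratios: "lam \<mu> / \<mu> > lam \<mu>' / \<mu>'" "lam \<mu>' / \<mu>' > cs"
  shows "\<forall>\<delta> t0. 0 < \<delta> \<and> \<delta> \<le> 2 \<longrightarrow>
    (\<exists>K. \<forall>d1 u0 u. d1 / \<delta> \<ge> K \<longrightarrow> u0 \<in> l_inf_plus \<longrightarrow> is_solution_E d f t0 u0 u \<longrightarrow>
      ((\<forall>j. u0 j \<le> \<delta> * (exp (- \<mu> * (j - c * t0)) * psi \<mu> t0 j)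
                   + d1 * (exp (- \<mu>' * (j - c * t0)) * psi \<mu>' t0 j)) \<longrightarrow>
        (\<forall>t\<ge>t0. \<forall>j. u t j \<le> \<delta> * (exp (- \<mu> * (j - c * t)) * psi \<mu> t j)
                   + d1 * (exp (- \<mu>' * (j - c * t)) * psi \<mu>' t j)))
      \<and> ((\<forall>j. u0 j \<ge> \<delta> * (exp (- \<mu> * (j - c * t0)) * psi \<mu> t0 j)
                   - d1 * (exp (- \<mu>' * (j - c * t0)) * psi \<mu>' t0 j)) \<longrightarrow>
        (\<forall>t\<ge>t0. \<forall>j. u t j \<ge> \<delta> * (exp (- \<mu> * (j - c * t)) * psi \<mu> t j)
                   - d1 * (exp (- \<mu>' * (j - c * t)) * psi \<mu>' t j))))"
proof -
  obtain A where kpp: "lattice_kpp d f A"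
    using lattice_kpp_if_H0[OF T_pos J_pos d_bdd d_inf_pos f_per H0_hoelder H0_lip H0_C1 H0_fu H0_neg] .
  define \<kappa> where "\<kappa> = \<mu>' * c - lam \<mu>'"
  have "0 < \<kappa>" using ratios(1) c_eq mu_bounds by (simp add: \<kappa>_def pos_divide_less_eq mult.commute)
  have fronts: "lattice_kpp_fronts d f A (front \<mu> c (psi \<mu>)) (front \<mu>' c (psi \<mu>')) \<kappa>"
    unfolding \<kappa>_def
    by (rule lattice_kpp_fronts_if_eigenfunctions[OF kpp psi_pos psi_eig])
      (use c_eq mu_bounds(1) \<open>0 < \<kappa>\<close> in \<open>simp_all add: \<kappa>_def\<close>)
  obtain Q P where psi_le_Q: "\<And>t j. psi \<mu> t j \<le> Q"
    and "0 < P" and P_le_psi: "\<And>t j. P \<le> psi \<mu>' t j"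
    using periodic_eigenfunctions_bounds[where psi=psi and l=lam, OF T_pos J_pos psi_pos psi_per psi_eig]
    by blast
  obtain L where L: "\<And>t j u v. \<bar>u\<bar> \<le> 2 * Q \<Longrightarrow> \<bar>v\<bar> \<le> 2 * Q \<Longrightarrow> \<bar>f t j u - f t j v\<bar> \<le> L * \<bar>u - v\<bar>"
    using H0_lip[of "2 * Q"] by blast
  define K where "K = max (Q / P) (2 * \<bar>L\<bar> * Q\<^sup>2 / (\<kappa> * P))"
  show ?thesis
  proof (intro allI impI exI[of _ K] conjI)
    fix \<delta> t0 d1 u0 u t j
    assume \<delta>: "0 < \<delta> \<and> \<delta> \<le> 2" and "K \<le> d1 / \<delta>"
      and sol: "is_solution_E d f t0 u0 u" and "t0 \<le> t"
    then have "\<delta> * K \<le> d1" by (metis mult.commute pos_le_divide_eq)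
    note bounds = front_comparison[OF fronts mu_bounds(1,2) _ \<open>0 < \<kappa>\<close> psi_pos psi_le_Q \<open>0 < P\<close> P_le_psi
        L _ _ this[unfolded K_def] sol \<open>t0 \<le> t\<close>]
    show "\<forall>j. u0 j \<le> \<delta> * (exp (- \<mu> * (j - c * t0)) * psi \<mu> t0 j)
          + d1 * (exp (- \<mu>' * (j - c * t0)) * psi \<mu>' t0 j) \<Longrightarrow>
        u t j \<le> \<delta> * (exp (- \<mu> * (j - c * t)) * psi \<mu> t j) + d1 * (exp (- \<mu>' * (j - c * t)) * psi \<mu>' t j)"
      using bounds(1) mu_bounds \<delta> unfolding front_def by auto
    show "\<forall>j. \<delta> * (exp (- \<mu> * (j - c * t0)) * psi \<mu> t0 j)
          - d1 * (exp (- \<mu>' * (j - c * t0)) * psi \<mu>' t0 j) \<le> u0 j \<Longrightarrow>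
        \<delta> * (exp (- \<mu> * (j - c * t)) * psi \<mu> t j) - d1 * (exp (- \<mu>' * (j - c * t)) * psi \<mu>' t j) \<le> u t j"
      using bounds(2) mu_bounds \<delta> unfolding front_def by auto
  qed
qed

end
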